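(* Let $\Gamma$ be a population network game, $\beta>0$, $\lambda\ge0$, and let $\sigma^2_{js}\ge0$ ($j\in V$, $s\in S_j$) be given. Consider the mean belief dynamics of an initially heterogeneous system, $$\frac{d\bar{\mu}_{is}}{dt}=\frac{f_{i,s}(\bar{\boldsymbol{\mu}})-\bar{\mu}_{is}}{\lambda+t+1}+\frac{\sum_{j\in V_i}\sum_{s'\in S_j}\frac{\partial^2 f_{i,s}}{\partial\mu_{js'}^2}(\bar{\boldsymbol{\mu}})\,\mathrm{Var}(\mu_{js'})(t)}{2(\lambda+t+1)},\qquad \mathrm{Var}(\mu_{js'})(t)=\Big(\tfrac{\lambda+1}{\lambda+t+1}\Big)^2\sigma^2_{js'},$$ for $i\in V$, $s\in S_i$. After the time reparametrization $\tau=\ln\frac{\lambda+t+1}{\lambda+1}$, this system is asymptotically autonomous with limit equation $$\frac{d\bar{\boldsymbol{\mu}}_i}{d\tau}=f_i(\{\bar{\boldsymbol{\mu}}_j\}_{j\in V_i})-\bar{\boldsymbol{\mu}}_i,\qquad i\in V,$$ i.e. its right-hand side $F(\tau,\bar{\boldsymbol{\mu}})$ converges, as $\tau\to\infty$, to $f(\bar{\boldsymbol{\mu}})-\bar{\boldsymbol{\mu}}$ uniformly on compact sets; and this limit equation is equivalent, via the same time reparametrization, to the belief dynamics of homogeneous systems $\frac{d\mu_{is}}{dt}=\frac{f_{i,s}(\{\boldsymbol{\mu}_j\}_{j\in V_i})-\mu_{is}}{\lambda+t+1}$.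
   Context: A population network game $\Gamma$ consists of a finite undirected graph with vertex set $V=\{1,\dots,n\}$ (populations) and edge set $E$; $V_i=\{j:\{i,j\}\in E\}$. Population $i$ has finite strategy set $S_i$, $\Delta_i\subset\mathbb{R}^{|S_i|}$ is the probability simplex, and each edge $\{i,j\}$ carries payoff matrices $\mathbf{A}_{ij}\in\mathbb{R}^{|S_i|\times|S_j|}$, $\mathbf{A}_{ji}\in\mathbb{R}^{|S_j|\times|S_i|}$. The logit choice function is $f_{i,s}(\{\boldsymbol{\mu}_j\}_{j\in V_i})=\exp\big(\beta\sum_{j\in V_i}\mathbf{e}_s^\top\mathbf{A}_{ij}\boldsymbol{\mu}_j\big)/\sum_{s'\in S_i}\exp\big(\beta\sum_{j\in V_i}\mathbf{e}_{s'}^\top\mathbf{A}_{ij}\boldsymbol{\mu}_j\big)$ ($\mathbf{e}_s$ the $s$-th unit vector), regarded as a smooth function of $(\boldsymbol{\mu}_j)_{j\in V_i}\in\prod_{j\in V_i}\mathbb{R}^{|S_j|}$; $f_{i,s}(\bar{\boldsymbol{\mu}})$ means $f_{i,s}(\{\bar{\boldsymbol{\mu}}_j\}_{j\in V_i})$. In a heterogeneous system, $\bar{\boldsymbol{\mu}}_j$ is the mean of the beliefs about population $j$ held across the system and $\sigma^2_{js}$ is the initial variance of the belief component $\mu_{js}$; the displayed variance formula is how this variance evolves. A nonautonomous system $x'=F(t,x)$ is asymptotically autonomous with limit equation $y'=g(y)$ if $F(t,x)\to g(x)$ as $t\to\infty$ uniformly on each compact set. *)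

theory Defs
  imports "HOL-Analysis.Analysis"
begin

text \<open>Populations are the elements of a finite type 'v, strategies are taken from a
finite type 's; population i uses the strategy set S i.  The graph is given by a
symmetric irreflexive relation E (V_i = {j. E i j}).  A i j s s' is the (s,s') entry of
the payoff matrix A_ij.  A state (mean belief profile) is a vector
mu :: real^('v * 's), whose coordinate (j,s) is mu_{js}; coordinates (j,s) with s not in
S j are irrelevant.\<close>

definition payoff :: "('v::finite \<Rightarrow> 's::finite set) \<Rightarrow> ('v \<Rightarrow> 'v \<Rightarrow> bool)
    \<Rightarrow> ('v \<Rightarrow> 'v \<Rightarrow> 's \<Rightarrow> 's \<Rightarrow> real) \<Rightarrow> 'v \<Rightarrow> 's \<Rightarrow> real^('v \<times> 's) \<Rightarrow> real" where
  "payoff S E A i s mu = (\<Sum>j\<in>{j. E i j}. \<Sum>s'\<in>S j. A i j s s' * mu $ (j, s'))"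

definition logit :: "('v::finite \<Rightarrow> 's::finite set) \<Rightarrow> ('v \<Rightarrow> 'v \<Rightarrow> bool)
    \<Rightarrow> ('v \<Rightarrow> 'v \<Rightarrow> 's \<Rightarrow> 's \<Rightarrow> real) \<Rightarrow> real \<Rightarrow> 'v \<Rightarrow> 's \<Rightarrow> real^('v \<times> 's) \<Rightarrow> real" where
  "logit S E A \<beta> i s mu =
     exp (\<beta> * payoff S E A i s mu) / (\<Sum>s''\<in>S i. exp (\<beta> * payoff S E A i s'' mu))"

definition upd :: "real^('k::finite) \<Rightarrow> 'k \<Rightarrow> real \<Rightarrow> real^'k" where
  "upd mu k x = (\<chi> k'. if k' = k then x else mu $ k')"

definition d2logit where
  "d2logit S E A \<beta> i s j s' mu =
     deriv (deriv (\<lambda>x. logit S E A \<beta> i s (upd mu (j, s') x))) (mu $ (j, s'))"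

definition het_rhs where
  "het_rhs S E A \<beta> lam \<sigma>2 i s t mu =
     (logit S E A \<beta> i s mu - mu $ (i, s)) / (lam + t + 1)
     + (\<Sum>j\<in>{j. E i j}. \<Sum>s'\<in>S j.
          d2logit S E A \<beta> i s j s' mu * (((lam + 1) / (lam + t + 1))^2 * \<sigma>2 j s'))
       / (2 * (lam + t + 1))"

text \<open>Inverse of the reparametrization tau = ln((lam+t+1)/(lam+1)).\<close>
definition tau_to_t :: "real \<Rightarrow> real \<Rightarrow> real" where
  "tau_to_t lam \<tau> = (lam + 1) * exp \<tau> - lam - 1"

text \<open>Right-hand side F(tau, mu) of the reparametrized heterogeneous system
  (dmu/dtau = dmu/dt * dt/dtau, with dt/dtau = lam + t + 1).\<close>
definition het_rhs_tau where
  "het_rhs_tau S E A \<beta> lam \<sigma>2 i s \<tau> mu =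
     (lam + tau_to_t lam \<tau> + 1) * het_rhs S E A \<beta> lam \<sigma>2 i s (tau_to_t lam \<tau>) mu"

definition lim_rhs where
  "lim_rhs S E A \<beta> i s mu = logit S E A \<beta> i s mu - mu $ (i, s)"

definition hom_rhs where
  "hom_rhs S E A \<beta> lam i s t mu = (logit S E A \<beta> i s mu - mu $ (i, s)) / (lam + t + 1)"

end

theory Submission
  imports Defs "HOL-Real_Asymp.Real_Asymp"
begin

text \<open>Since \<open>dt/d\<tau> = \<lambda> + t + 1\<close> and \<open>\<tau> \<mapsto> t\<close> is a diffeomorphism of \<open>[0,\<infinity>)\<close>, the chain
rule turns solutions of a system \<open>d\<mu>/dt = G(t,\<mu>)\<close> into solutions of
\<open>d\<mu>/d\<tau> = (\<lambda> + t + 1) G(t,\<mu>)\<close> and back.  For the homogeneous dynamics the new right-hand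
side is exactly \<open>f(\<mu>) - \<mu>\<close>; for the heterogeneous one it exceeds \<open>f(\<mu>) - \<mu>\<close> by
\<open>e\<^sup>-\<^sup>2\<^sup>\<tau>/2\<close> times a weighted sum of second partial derivatives of logit functions.
Along a single coordinate a logit function is a softmax of affine functions \<open>a\<^sub>r + d\<^sub>r x\<close>,
whose second derivative is \<open>q ((d\<^sub>s - m)\<^sup>2 - E[d (d - m)])\<close>, where \<open>q \<in> [0,1]\<close> is the
softmax weight of \<open>s\<close>, \<open>E\<close> the mean under the softmax weights and \<open>m = E[d]\<close>.  It is therefore bounded by
\<open>6 max\<^sub>r d\<^sub>r\<^sup>2\<close> independently of the state, so the convergence is even uniform on the whole
state space.\<close>

lemma tau_to_t_plus: "lam + tau_to_t lam \<tau> + 1 = (lam + 1) * exp \<tau>"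
  by (simp add: tau_to_t_def)

lemma tau_to_t_nonneg:
  assumes "lam > -1" "\<tau> \<ge> 0"
  shows "tau_to_t lam \<tau> \<ge> 0"
proof -
  have "(lam + 1) * 1 \<le> (lam + 1) * exp \<tau>"
    using assms by (intro mult_left_mono) auto
  then show ?thesis
    by (simp add: tau_to_t_def)
qed

lemma tau_to_t_ln:
  assumes "lam > -1" "lam + t + 1 > 0"
  shows "tau_to_t lam (ln ((lam + t + 1) / (lam + 1))) = t"
  using assms by (simp add: tau_to_t_def)

lemma has_real_derivative_tau_to_t:
  "(tau_to_t lam has_real_derivative lam + tau_to_t lam \<tau> + 1) (at \<tau> within X)"
  unfolding tau_to_t_def by (auto intro!: derivative_eq_intros)

lemma has_real_derivative_reparam_iff:
  fixes g \<phi> :: "real \<Rightarrow> real"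
  assumes lam: "lam > -1"
  shows "(\<forall>t\<ge>0. (g has_real_derivative \<phi> t) (at t within {0..})) \<longleftrightarrow>
    (\<forall>\<tau>\<ge>0. ((\<lambda>\<tau>. g (tau_to_t lam \<tau>)) has_real_derivative
       (lam + tau_to_t lam \<tau> + 1) * \<phi> (tau_to_t lam \<tau>)) (at \<tau> within {0..}))"
    (is "?t \<longleftrightarrow> ?\<tau>")
proof
  let ?T = "tau_to_t lam"
  assume ?t
  show ?\<tau>
  proof (intro allI impI)
    fix \<tau> :: real assume "\<tau> \<ge> 0"
    have "?T ` {0..} \<subseteq> {0..}"
      using tau_to_t_nonneg[OF lam] by auto
    with \<open>?t\<close> \<open>\<tau> \<ge> 0\<close> have "(g has_real_derivative \<phi> (?T \<tau>)) (at (?T \<tau>) within ?T ` {0..})"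
      by (auto intro: DERIV_subset)
    from DERIV_image_chain[OF this has_real_derivative_tau_to_t]
    show "((\<lambda>\<tau>. g (?T \<tau>)) has_real_derivative (lam + ?T \<tau> + 1) * \<phi> (?T \<tau>)) (at \<tau> within {0..})"
      by (simp add: o_def mult.commute)
  qed
next
  let ?T = "tau_to_t lam"
  define h where "h t = ln ((lam + t + 1) / (lam + 1))" for t
  assume ?\<tau>
  show ?t
  proof (intro allI impI)
    fix t :: real assume "t \<ge> 0"
    then have pos: "lam + t + 1 > 0"
      using lam by simp
    have "h ` {0..} \<subseteq> {0..}"
      using lam by (auto simp: h_def)
    moreover have "?T (h t) = t" "h t \<ge> 0"
      using tau_to_t_ln[OF lam pos] \<open>t \<ge> 0\<close> lam by (auto simp: h_def)
    ultimately have "((\<lambda>\<tau>. g (?T \<tau>)) has_real_derivative (lam + t + 1) * \<phi> t)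
        (at (h t) within h ` {0..})"
      using \<open>?\<tau>\<close> by (metis DERIV_subset)
    moreover have "(h has_real_derivative 1 / (lam + t + 1)) (at t within {0..})"
      unfolding h_def using lam pos by (auto intro!: derivative_eq_intros)
    ultimately have "((\<lambda>\<tau>. g (?T \<tau>)) \<circ> h has_real_derivative \<phi> t) (at t within {0..})"
      using DERIV_image_chain pos by fastforce
    then show "(g has_real_derivative \<phi> t) (at t within {0..})"
      by (rule has_field_derivative_transform_within[where d = 1])
        (use \<open>t \<ge> 0\<close> lam in \<open>auto simp: h_def tau_to_t_ln\<close>)
  qed
qed

definition softmax :: "'a set \<Rightarrow> ('a \<Rightarrow> real) \<Rightarrow> 'a \<Rightarrow> real" where
  "softmax R u r = exp (u r) / (\<Sum>r'\<in>R. exp (u r'))"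

definition softmax_avg :: "'a set \<Rightarrow> ('a \<Rightarrow> real) \<Rightarrow> ('a \<Rightarrow> real) \<Rightarrow> real" where
  "softmax_avg R u f = (\<Sum>r\<in>R. softmax R u r * f r)"

context
  fixes R :: "'a set"
  assumes R: "finite R" "R \<noteq> {}"
begin

lemma sum_exp_pos: "(\<Sum>r\<in>R. exp (u r :: real)) > 0"
  using R by (intro sum_pos) auto

lemma softmax_pos: "softmax R u r > 0"
  unfolding softmax_def by (intro divide_pos_pos exp_gt_zero sum_exp_pos)

lemma sum_softmax: "(\<Sum>r\<in>R. softmax R u r) = 1"
  unfolding softmax_def using sum_exp_pos[of u] by (simp flip: sum_divide_distrib)

lemma softmax_le_one:
  assumes "r \<in> R"
  shows "softmax R u r \<le> 1"
proof -
  have "softmax R u r \<le> (\<Sum>r\<in>R. softmax R u r)"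
    using R(1) assms softmax_pos by (intro member_le_sum) (auto intro: less_imp_le)
  then show ?thesis
    by (simp only: sum_softmax)
qed

lemma abs_softmax_avg_le:
  assumes "\<forall>r\<in>R. \<bar>f r\<bar> \<le> M"
  shows "\<bar>softmax_avg R u f\<bar> \<le> M"
proof -
  have "\<bar>softmax_avg R u f\<bar> \<le> (\<Sum>r\<in>R. \<bar>softmax R u r * f r\<bar>)"
    unfolding softmax_avg_def by (rule sum_abs)
  also have "\<dots> \<le> (\<Sum>r\<in>R. softmax R u r * M)"
    using assms softmax_pos[THEN less_imp_le]
    by (intro sum_mono) (auto simp: abs_mult intro!: mult_left_mono)
  also have "\<dots> = M"
    by (simp only: sum_distrib_right[symmetric] sum_softmax mult_1)
  finally show ?thesis .
qed

lemma has_real_derivative_softmax_affine: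
  "((\<lambda>x. softmax R (\<lambda>r. a r + d r * x) s) has_real_derivative
     softmax R (\<lambda>r. a r + d r * x) s * (d s - softmax_avg R (\<lambda>r. a r + d r * x) d)) (at x)"
proof -
  define e where "e = (\<lambda>r x. exp (a r + d r * x))"
  define Z where "Z = (\<lambda>x. \<Sum>r\<in>R. e r x)"
  have de: "(e r has_real_derivative d r * e r x) (at x)" for r
    unfolding e_def by (rule derivative_eq_intros refl | simp)+
  have dZ: "(Z has_real_derivative (\<Sum>r\<in>R. d r * e r x)) (at x)"
    unfolding Z_def by (intro DERIV_sum de)
  have Z: "Z x > 0"
    unfolding Z_def e_def by (rule sum_exp_pos)
  have "((\<lambda>x. e s x / Z x) has_real_derivative
      (d s * e s x * Z x - e s x * (\<Sum>r\<in>R. d r * e r x)) / (Z x * Z x)) (at x)"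
    using DERIV_divide[OF de dZ] Z by simp
  moreover have "(d s * e s x * Z x - e s x * (\<Sum>r\<in>R. d r * e r x)) / (Z x * Z x)
      = e s x / Z x * (d s - (\<Sum>r\<in>R. e r x / Z x * d r))"
    using Z by (simp add: field_simps sum_divide_distrib[symmetric] mult.commute)
  ultimately show ?thesis
    unfolding softmax_avg_def softmax_def e_def Z_def by simp
qed

lemma has_real_derivative_softmax_avg_affine:
  "((\<lambda>x. softmax_avg R (\<lambda>r. a r + d r * x) f) has_real_derivative
     softmax_avg R (\<lambda>r. a r + d r * x) (\<lambda>r. f r * (d r - softmax_avg R (\<lambda>r. a r + d r * x) d)))
   (at x)"
proof -
  let ?u = "\<lambda>x r. a r + d r * x"
  have "((\<lambda>x. \<Sum>r\<in>R. softmax R (?u x) r * f r) has_real_derivative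
      (\<Sum>r\<in>R. softmax R (?u x) r * (d r - softmax_avg R (?u x) d) * f r)) (at x)"
    by (intro DERIV_sum DERIV_cmult_right has_real_derivative_softmax_affine)
  then show ?thesis
    by (simp add: softmax_avg_def mult_ac)
qed

lemma deriv2_softmax_affine:
  fixes a d :: "'a \<Rightarrow> real"
  defines "m \<equiv> \<lambda>x. softmax_avg R (\<lambda>r. a r + d r * x) d"
  shows "deriv (deriv (\<lambda>x. softmax R (\<lambda>r. a r + d r * x) s)) x
    = softmax R (\<lambda>r. a r + d r * x) s
      * ((d s - m x)\<^sup>2 - softmax_avg R (\<lambda>r. a r + d r * x) (\<lambda>r. d r * (d r - m x)))"
proof -
  let ?q = "\<lambda>x. softmax R (\<lambda>r. a r + d r * x) s"
  have "deriv ?q = (\<lambda>x. ?q x * (d s - m x))"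
    unfolding m_def by (intro ext DERIV_imp_deriv has_real_derivative_softmax_affine)
  moreover have "((\<lambda>x. ?q x * (d s - m x)) has_real_derivative
      ?q x * (d s - m x) * (d s - m x)
      - ?q x * softmax_avg R (\<lambda>r. a r + d r * x) (\<lambda>r. d r * (d r - m x))) (at x)"
    unfolding m_def
    by (rule derivative_eq_intros has_real_derivative_softmax_affine
        has_real_derivative_softmax_avg_affine refl | simp add: algebra_simps)+
  ultimately show ?thesis
    by (simp add: DERIV_imp_deriv power2_eq_square algebra_simps)
qed

lemma abs_deriv2_softmax_affine_le:
  assumes "s \<in> R" and d: "\<forall>r\<in>R. \<bar>d r\<bar> \<le> M"
  shows "\<bar>deriv (deriv (\<lambda>x. softmax R (\<lambda>r. a r + d r * x) s)) x\<bar> \<le> 6 * M\<^sup>2"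
proof -
  define u where "u = (\<lambda>r. a r + d r * x)"
  define m where "m = softmax_avg R u d"
  have M: "M \<ge> 0" using d \<open>s \<in> R\<close> by force
  have "\<bar>m\<bar> \<le> M"
    unfolding m_def using d by (rule abs_softmax_avg_le)
  then have dm: "\<bar>d r - m\<bar> \<le> 2 * M" if "r \<in> R" for r
    using d that by force
  have "(d s - m)\<^sup>2 \<le> 4 * M\<^sup>2"
    using power_mono[OF dm[OF \<open>s \<in> R\<close>] abs_ge_zero, of 2] by simp
  moreover have "\<bar>softmax_avg R u (\<lambda>r. d r * (d r - m))\<bar> \<le> M * (2 * M)"
    using d dm M by (intro abs_softmax_avg_le) (auto simp: abs_mult intro: mult_mono)
  then have "\<bar>softmax_avg R u (\<lambda>r. d r * (d r - m))\<bar> \<le> 2 * M\<^sup>2"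
    by (simp add: power2_eq_square)
  ultimately have "\<bar>(d s - m)\<^sup>2 - softmax_avg R u (\<lambda>r. d r * (d r - m))\<bar> \<le> 6 * M\<^sup>2"
    using zero_le_power2[of "d s - m"] by linarith
  moreover have "0 \<le> softmax R u s" "softmax R u s \<le> 1"
    using softmax_pos softmax_le_one[OF \<open>s \<in> R\<close>] by (auto intro: less_imp_le)
  ultimately have "\<bar>softmax R u s * ((d s - m)\<^sup>2 - softmax_avg R u (\<lambda>r. d r * (d r - m)))\<bar> \<le> 1 * (6 * M\<^sup>2)"
    unfolding abs_mult by (intro mult_mono) auto
  then show ?thesis
    by (simp add: deriv2_softmax_affine u_def m_def)
qed

end

lemma payoff_upd:
  "payoff S E A i r (upd mu (j, s') x) =
     payoff S E A i r (upd mu (j, s') 0) + (if E i j \<and> s' \<in> S j then A i j r s' else 0) * x"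
proof -
  have "payoff S E A i r (upd mu (j, s') x) =
      (\<Sum>j'\<in>{j. E i j}. \<Sum>s''\<in>S j'. A i j' r s'' * upd mu (j, s') 0 $ (j', s'')
        + (if j' = j \<and> s'' = s' then A i j r s' * x else 0))"
    unfolding payoff_def upd_def by (intro sum.cong refl) auto
  also have "\<dots> = payoff S E A i r (upd mu (j, s') 0)
      + (\<Sum>j'\<in>{j. E i j}. if j' = j \<and> s' \<in> S j then A i j r s' * x else 0)"
    unfolding payoff_def sum.distrib
    by (intro arg_cong2[where f = "(+)"] refl sum.cong) (auto simp: sum.delta' intro!: sum.neutral)
  also have "\<dots> = payoff S E A i r (upd mu (j, s') 0) + (if E i j \<and> s' \<in> S j then A i j r s' else 0) * x"
    by (cases "s' \<in> S j") (simp_all add: sum.delta')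
  finally show ?thesis .
qed

lemma logit_upd_eq_softmax:
  "logit S E A \<beta> i s (upd mu (j, s') x) =
     softmax (S i) (\<lambda>r. \<beta> * payoff S E A i r (upd mu (j, s') 0)
                         + \<beta> * (if E i j \<and> s' \<in> S j then A i j r s' else 0) * x) s"
  unfolding logit_def softmax_def payoff_upd[of S E A i _ mu j s' x] by (simp add: algebra_simps)

lemma abs_d2logit_le:
  fixes S :: "'v::finite \<Rightarrow> 's::finite set"
  assumes "s \<in> S i"
  shows "\<bar>d2logit S E A \<beta> i s j s' mu\<bar> \<le> 6 * (\<bar>\<beta>\<bar> * (\<Sum>r\<in>UNIV. \<bar>A i j r s'\<bar>))\<^sup>2"
proof -
  have "\<bar>\<beta> * (if E i j \<and> s' \<in> S j then A i j r s' else 0)\<bar> \<le> \<bar>\<beta>\<bar> * (\<Sum>r\<in>UNIV. \<bar>A i j r s'\<bar>)" for r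
    using member_le_sum[of r UNIV "\<lambda>r. \<bar>A i j r s'\<bar>"]
    by (auto simp: abs_mult intro!: mult_left_mono)
  then show ?thesis
    unfolding d2logit_def logit_upd_eq_softmax
    using assms by (intro abs_deriv2_softmax_affine_le) auto
qed

lemma uniform_limit_of_dist_le:
  assumes "\<forall>\<^sub>F n in F. \<forall>x\<in>S. dist (f n x) (g x) \<le> b n" and "(b \<longlongrightarrow> 0) F"
  shows "uniform_limit S f g F"
proof (rule uniform_limitI)
  fix e :: real assume "e > 0"
  with assms(2) have "\<forall>\<^sub>F n in F. b n < e"
    by (rule order_tendstoD)
  with assms(1) show "\<forall>\<^sub>F n in F. \<forall>x\<in>S. dist (f n x) (g x) < e"
    by eventually_elim force
qed

lemma het_rhs_tau_eq_lim_rhs_plus: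
  assumes "lam > -1"
  shows "het_rhs_tau S E A \<beta> lam \<sigma>2 i s \<tau> mu = lim_rhs S E A \<beta> i s mu
    + exp (-(2 * \<tau>)) / 2 * (\<Sum>j\<in>{j. E i j}. \<Sum>s'\<in>S j. d2logit S E A \<beta> i s j s' mu * \<sigma>2 j s')"
proof -
  define L where "L = (lam + 1) * exp \<tau>"
  have "L > 0"
    using assms by (simp add: L_def)
  have "(lam + 1) / L = exp (-\<tau>)"
    using assms by (simp add: L_def exp_minus divide_simps)
  then have "((lam + 1) / L)\<^sup>2 = exp (-(2 * \<tau>))"
    by (simp add: power2_eq_square flip: exp_add)
  then show ?thesis
    using \<open>L > 0\<close>
    unfolding het_rhs_tau_def het_rhs_def lim_rhs_def tau_to_t_plus L_def[symmetric]
    by (simp add: sum_distrib_left field_simps)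
qed

lemma scaled_hom_rhs_eq_lim_rhs:
  assumes "lam > -1"
  shows "(lam + tau_to_t lam \<tau> + 1) * hom_rhs S E A \<beta> lam i s (tau_to_t lam \<tau>) mu
    = lim_rhs S E A \<beta> i s mu"
  using assms by (simp add: lim_rhs_def hom_rhs_def tau_to_t_plus)

lemma het_rhs_tau_uniform_limit:
  fixes S :: "'v::finite \<Rightarrow> 's::finite set"
  assumes "lam > -1" "s \<in> S i"
  shows "uniform_limit K (het_rhs_tau S E A \<beta> lam \<sigma>2 i s) (lim_rhs S E A \<beta> i s) at_top"
proof (rule uniform_limit_of_dist_le)
  define C where "C = (\<Sum>j\<in>{j. E i j}. \<Sum>s'\<in>S j.
    6 * (\<bar>\<beta>\<bar> * (\<Sum>r\<in>UNIV. \<bar>A i j r s'\<bar>))\<^sup>2 * \<bar>\<sigma>2 j s'\<bar>)"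
  have "\<bar>\<Sum>j\<in>{j. E i j}. \<Sum>s'\<in>S j. d2logit S E A \<beta> i s j s' mu * \<sigma>2 j s'\<bar> \<le> C" for mu
    unfolding C_def
    by (intro order_trans[OF sum_abs] sum_mono)
      (auto simp: abs_mult intro!: mult_right_mono
        abs_d2logit_le[where S = S and s = s and i = i, OF assms(2)])
  then show "\<forall>\<^sub>F \<tau> in at_top. \<forall>mu\<in>K.
      dist (het_rhs_tau S E A \<beta> lam \<sigma>2 i s \<tau> mu) (lim_rhs S E A \<beta> i s mu) \<le> exp (-(2 * \<tau>)) / 2 * C"
    by (auto simp: dist_real_def het_rhs_tau_eq_lim_rhs_plus[OF assms(1)] abs_mult intro!: mult_left_mono)
  show "((\<lambda>\<tau>. exp (-(2 * \<tau>)) / 2 * C) \<longlongrightarrow> 0) at_top"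
    by real_asymp
qed

theorem lemma1:
  fixes S :: "'v::finite \<Rightarrow> 's::finite set"
    and E :: "'v \<Rightarrow> 'v \<Rightarrow> bool"
    and A :: "'v \<Rightarrow> 'v \<Rightarrow> 's \<Rightarrow> 's \<Rightarrow> real"
    and \<beta> lam :: real
    and \<sigma>2 :: "'v \<Rightarrow> 's \<Rightarrow> real"
  assumes sym: "\<forall>i j. E i j \<longrightarrow> E j i"
    and irrefl: "\<forall>i. \<not> E i i"
    and nonempty: "\<forall>i. S i \<noteq> {}"
    and beta: "\<beta> > 0"
    and lam: "lam \<ge> 0"
    and var: "\<forall>j. \<forall>s\<in>S j. \<sigma>2 j s \<ge> 0"
  shows
    "(\<forall>x :: real \<Rightarrow> real^('v \<times> 's).
        (\<forall>t\<ge>0. \<forall>i. \<forall>s\<in>S i.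
           ((\<lambda>t. x t $ (i, s)) has_real_derivative het_rhs S E A \<beta> lam \<sigma>2 i s t (x t))
             (at t within {0..}))
        \<longleftrightarrow>
        (\<forall>\<tau>\<ge>0. \<forall>i. \<forall>s\<in>S i.
           ((\<lambda>\<tau>. x (tau_to_t lam \<tau>) $ (i, s)) has_real_derivative
              het_rhs_tau S E A \<beta> lam \<sigma>2 i s \<tau> (x (tau_to_t lam \<tau>)))
             (at \<tau> within {0..})))
     \<and> (\<forall>K :: (real^('v \<times> 's)) set. compact K \<longrightarrow>
          (\<forall>i. \<forall>s\<in>S i.
             uniform_limit K (\<lambda>\<tau> mu. het_rhs_tau S E A \<beta> lam \<sigma>2 i s \<tau> mu)
               (lim_rhs S E A \<beta> i s) at_top))
     \<and> (\<forall>x :: real \<Rightarrow> real^('v \<times> 's).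
        (\<forall>t\<ge>0. \<forall>i. \<forall>s\<in>S i.
           ((\<lambda>t. x t $ (i, s)) has_real_derivative hom_rhs S E A \<beta> lam i s t (x t))
             (at t within {0..}))
        \<longleftrightarrow>
        (\<forall>\<tau>\<ge>0. \<forall>i. \<forall>s\<in>S i.
           ((\<lambda>\<tau>. x (tau_to_t lam \<tau>) $ (i, s)) has_real_derivative
              lim_rhs S E A \<beta> i s (x (tau_to_t lam \<tau>)))
             (at \<tau> within {0..})))"
proof -
  have lam': "lam > -1"
    using lam by simp
  have het: "(\<forall>t\<ge>0. ((\<lambda>t. x t $ (i, s)) has_real_derivative het_rhs S E A \<beta> lam \<sigma>2 i s t (x t))
        (at t within {0..})) \<longleftrightarrow>
      (\<forall>\<tau>\<ge>0. ((\<lambda>\<tau>. x (tau_to_t lam \<tau>) $ (i, s)) has_real_derivative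
        het_rhs_tau S E A \<beta> lam \<sigma>2 i s \<tau> (x (tau_to_t lam \<tau>))) (at \<tau> within {0..}))"
    for x :: "real \<Rightarrow> real^('v \<times> 's)" and i s
    unfolding het_rhs_tau_def by (rule has_real_derivative_reparam_iff[OF lam'])
  have hom: "(\<forall>t\<ge>0. ((\<lambda>t. x t $ (i, s)) has_real_derivative hom_rhs S E A \<beta> lam i s t (x t))
        (at t within {0..})) \<longleftrightarrow>
      (\<forall>\<tau>\<ge>0. ((\<lambda>\<tau>. x (tau_to_t lam \<tau>) $ (i, s)) has_real_derivative
        lim_rhs S E A \<beta> i s (x (tau_to_t lam \<tau>))) (at \<tau> within {0..}))"
    for x :: "real \<Rightarrow> real^('v \<times> 's)" and i s
    using has_real_derivative_reparam_iff[OF lam', of "\<lambda>t. x t $ (i, s)"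
        "\<lambda>t. hom_rhs S E A \<beta> lam i s t (x t)"]
    by (simp only: scaled_hom_rhs_eq_lim_rhs[OF lam'])
  have swap: "(\<forall>t\<ge>0. \<forall>i. \<forall>s\<in>S i. P t i s) \<longleftrightarrow> (\<forall>i. \<forall>s\<in>S i. \<forall>t\<ge>(0::real). P t i s)"
    for P
    by blast
  show ?thesis
    unfolding swap het hom using het_rhs_tau_uniform_limit[OF lam'] by blast
qed

end
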